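(* Let $(p_n)_{n \ge 1}$ be a strictly increasing sequence of prime numbers and fix $\ell \in \mathbb{N}$. Then the Puiseux monoid $\left\langle \frac{1}{p_n p_{n+\ell}} \;\middle|\; n \in \mathbb{N} \right\rangle$ is atomic.
   Context: A Puiseux monoid is an additive submonoid of $(\mathbb{Q}_{\ge 0},+)$; $\langle S \rangle$ denotes the submonoid generated by $S$. An atom of $M$ is a nonzero element $a$ such that $a = x+y$ with $x,y \in M$ forces $x=0$ or $y=0$; $M$ is atomic if every element of $M$ is a finite sum of atoms. *)

theory Defs
  imports Complex_Main "HOL-Library.Multiset" "HOL-Computational_Algebra.Primes"
begin

inductive_set gen_monoid :: "rat set \<Rightarrow> rat set" for S :: "rat set" where
  zero: "0 \<in> gen_monoid S"
| add_gen: "s \<in> S \<Longrightarrow> x \<in> gen_monoid S \<Longrightarrow> s + x \<in> gen_monoid S"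

definition atoms :: "rat set \<Rightarrow> rat set" where
  "atoms M = {a \<in> M. a \<noteq> 0 \<and> (\<forall>x\<in>M. \<forall>y\<in>M. a = x + y \<longrightarrow> x = 0 \<or> y = 0)}"

definition atomic :: "rat set \<Rightarrow> bool" where
  "atomic M \<longleftrightarrow> (\<forall>x\<in>M. \<exists>A :: rat multiset. set_mset A \<subseteq> atoms M \<and> sum_mset A = x)"

end

theory Submission
  imports Defs
begin

text \<open>Write a_n = 1 / (p_n p_(n+l)). A generator smaller than a_n has a larger index, so
  its denominator is coprime to p_n. Hence every element of the monoid below a_n lies in the
  localisation of the integers at p_n (the rationals with denominator coprime to p_n), which is
  closed under addition but does not contain a_n. So a_n is not a sum of two nonzero elements:
  every generator is an atom, and the monoid is atomic.\<close>

lemma gen_monoid_nonneg: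
  assumes "\<And>s. s \<in> S \<Longrightarrow> s \<ge> 0" and "x \<in> gen_monoid S"
  shows "x \<ge> 0"
  using assms(2) by induction (auto intro: add_nonneg_nonneg assms(1))

lemma gen_monoid_sum_mset:
  assumes "x \<in> gen_monoid S"
  shows "\<exists>A. set_mset A \<subseteq> S \<and> sum_mset A = x"
  using assms
proof induction
  case zero
  show ?case by (intro exI[of _ "{#}"]) simp
next
  case (add_gen s x)
  then obtain A where "set_mset A \<subseteq> S" "sum_mset A = x" by blast
  with add_gen.hyps(1) show ?case by (intro exI[of _ "add_mset s A"]) auto
qed

lemma atomic_gen_monoid_if_generators_atoms:
  assumes "S \<subseteq> atoms (gen_monoid S)"
  shows "atomic (gen_monoid S)"
  unfolding atomic_def using gen_monoid_sum_mset assms by (meson order_trans)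

lemma gen_monoid_atomI:
  assumes pos: "\<And>s. s \<in> S \<Longrightarrow> s > 0" and "a \<in> S"
    and R_zero: "0 \<in> R" and R_add: "\<And>x y. x \<in> R \<Longrightarrow> y \<in> R \<Longrightarrow> x + y \<in> R"
    and below: "\<And>s. s \<in> S \<Longrightarrow> s < a \<Longrightarrow> s \<in> R"
    and "a \<notin> R"
  shows "a \<in> atoms (gen_monoid S)"
proof -
  have nonneg: "x \<ge> 0" if "x \<in> gen_monoid S" for x
    using gen_monoid_nonneg[OF _ that] pos by fastforce
  have below_in_R: "x < a \<Longrightarrow> x \<in> R" if "x \<in> gen_monoid S" for x
    using that
  proof induction
    case zero
    show ?case using R_zero .
  next
    case (add_gen s x)
    have "s < a" "x < a" using add_gen nonneg pos by fastforce+
    then show ?case using add_gen below R_add by blast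
  qed
  have split: "x = 0 \<or> y = 0" if "x \<in> gen_monoid S" "y \<in> gen_monoid S" "a = x + y" for x y
  proof (rule ccontr)
    assume "\<not> (x = 0 \<or> y = 0)"
    then have "x > 0" "y > 0" using nonneg that by force+
    then have "x \<in> R" "y \<in> R" using below_in_R that by auto
    then have "a \<in> R" using R_add that(3) by blast
    with \<open>a \<notin> R\<close> show False ..
  qed
  have "a \<in> gen_monoid S" using gen_monoid.add_gen[OF \<open>a \<in> S\<close> gen_monoid.zero] by simp
  moreover have "a \<noteq> 0" using pos \<open>a \<in> S\<close> by fastforce
  ultimately show ?thesis using split unfolding atoms_def by blast
qed

definition coprime_denom_rats :: "nat \<Rightarrow> rat set" where
  "coprime_denom_rats q = {of_int k / of_nat d | k d. d > 0 \<and> coprime d q}"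

lemma zero_in_coprime_denom_rats: "0 \<in> coprime_denom_rats q"
  unfolding coprime_denom_rats_def by (intro CollectI exI[of _ 0] exI[of _ 1]) simp

lemma one_div_in_coprime_denom_rats:
  assumes "d > 0" "coprime d q"
  shows "1 / of_nat d \<in> coprime_denom_rats q"
  unfolding coprime_denom_rats_def using assms by (intro CollectI exI[of _ 1] exI[of _ d]) simp

lemma add_in_coprime_denom_rats:
  assumes "a \<in> coprime_denom_rats q" "b \<in> coprime_denom_rats q"
  shows "a + b \<in> coprime_denom_rats q"
proof -
  obtain k1 d1 where 1: "d1 > 0" "coprime d1 q" "a = of_int k1 / of_nat d1"
    using assms(1) unfolding coprime_denom_rats_def by blast
  obtain k2 d2 where 2: "d2 > 0" "coprime d2 q" "b = of_int k2 / of_nat d2"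
    using assms(2) unfolding coprime_denom_rats_def by blast
  have "a + b = of_int (k1 * int d2 + k2 * int d1) / of_nat (d1 * d2)"
    using 1 2 by (simp add: field_simps)
  moreover have "d1 * d2 > 0" "coprime (d1 * d2) q" using 1 2 by auto
  ultimately show ?thesis unfolding coprime_denom_rats_def by blast
qed

lemma one_div_mult_notin_coprime_denom_rats:
  assumes "prime q" "m > 0"
  shows "1 / of_nat (q * m) \<notin> coprime_denom_rats q"
proof
  assume "1 / of_nat (q * m) \<in> coprime_denom_rats q"
  then obtain k d where kd: "d > 0" "coprime d q" "(1::rat) / of_nat (q * m) = of_int k / of_nat d"
    unfolding coprime_denom_rats_def by blast
  have "(of_nat (q * m) :: rat) \<noteq> 0" using assms prime_gt_0_nat by simp
  with kd have "(of_nat d :: rat) = of_int k * of_nat (q * m)" by (simp add: field_simps)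
  then have "int d = k * int (q * m)" by (metis of_int_eq_iff of_int_mult of_int_of_nat_eq)
  then have "q dvd d" by (metis dvd_triv_left int_dvd_int_iff mult.left_commute of_nat_mult dvdI)
  with kd(2) have "q dvd 1" by (metis coprime_common_divisor dvd_refl)
  with assms(1) show False by simp
qed

lemma smaller_generator_coprime:
  fixes p :: "nat \<Rightarrow> nat"
  assumes primes: "\<And>n. n \<ge> 1 \<Longrightarrow> prime (p n)"
    and incr: "\<And>m n. 1 \<le> m \<Longrightarrow> m < n \<Longrightarrow> p m < p n"
    and "n \<ge> 1" "j \<ge> 1"
    and less: "1 / (of_nat (p j * p (j + l)) :: rat) < 1 / of_nat (p n * p (n + l))"
  shows "coprime (p j * p (j + l)) (p n)"
proof -
  have "n < j"
  proof (rule ccontr)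
    assume "\<not> n < j"
    then have "p j \<le> p n" "p (j + l) \<le> p (n + l)"
      using incr \<open>j \<ge> 1\<close> by (metis add_le_cancel_right le_add1 linorder_not_less nat_less_le
          order_trans)+
    then have "(of_nat (p j * p (j + l)) :: rat) \<le> of_nat (p n * p (n + l))"
      by (simp add: mult_mono)
    moreover have "(of_nat (p j * p (j + l)) :: rat) > 0"
      using primes \<open>j \<ge> 1\<close> prime_gt_0_nat by simp
    ultimately have "1 / of_nat (p n * p (n + l)) \<le> (1::rat) / of_nat (p j * p (j + l))"
      by (intro frac_le) auto
    with less show False by simp
  qed
  then have "p n < p j" "p n < p (j + l)" using incr \<open>n \<ge> 1\<close> by auto
  then have "coprime (p j) (p n)" "coprime (p (j + l)) (p n)"
    using primes \<open>n \<ge> 1\<close> \<open>j \<ge> 1\<close> by (metis primes_coprime le_add1 order_trans less_irrefl)+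
  then show ?thesis by simp
qed

theorem proposition3p7:
  fixes p :: "nat \<Rightarrow> nat" and l :: nat
  assumes primes: "\<And>n. n \<ge> 1 \<Longrightarrow> prime (p n)"
    and incr: "\<And>m n. 1 \<le> m \<Longrightarrow> m < n \<Longrightarrow> p m < p n"
  shows "atomic (gen_monoid {1 / (of_nat (p n * p (n + l)) :: rat) | n. n \<ge> 1})"
proof -
  define S where "S = {1 / (of_nat (p n * p (n + l)) :: rat) | n. n \<ge> 1}"
  have ppos: "p n > 0" if "n \<ge> 1" for n using primes[OF that] prime_gt_0_nat by blast
  have "S \<subseteq> atoms (gen_monoid S)"
  proof
    fix a assume "a \<in> S"
    then obtain n where n: "n \<ge> 1" "a = 1 / of_nat (p n * p (n + l))" unfolding S_def by blast
    show "a \<in> atoms (gen_monoid S)"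
    proof (rule gen_monoid_atomI[OF _ \<open>a \<in> S\<close> zero_in_coprime_denom_rats add_in_coprime_denom_rats])
      show "s > 0" if "s \<in> S" for s using that ppos unfolding S_def by auto
      show "s \<in> coprime_denom_rats (p n)" if "s \<in> S" "s < a" for s
      proof -
        obtain j where j: "j \<ge> 1" "s = 1 / of_nat (p j * p (j + l))"
          using \<open>s \<in> S\<close> unfolding S_def by blast
        then have "coprime (p j * p (j + l)) (p n)"
          using smaller_generator_coprime[of p n j l] primes incr n \<open>s < a\<close> by blast
        then show ?thesis
          using j ppos one_div_in_coprime_denom_rats[of "p j * p (j + l)" "p n"] by simp
      qed
      show "a \<notin> coprime_denom_rats (p n)"
        using n one_div_mult_notin_coprime_denom_rats primes ppos add_increasing by auto
    qed
  qed
  then show ?thesis unfolding S_def by (rule atomic_gen_monoid_if_generators_atoms)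
qed

end
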